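(* In the noisy setting, there is a sequence $\epsilon_n\to0$ (depending on $\beta,P_X,P_{Y\mid X}$) such that for all $n$ \[ P^*_{\mathrm{error}}\le 2(1+\epsilon_n)\left\{\beta\wedge\frac1{I(Y;\tilde Y)}\right\}\frac{\log n}{n}, \] with the convention $1/0=\infty$.
   Context: Setting. Let $\mathcal X,\mathcal Y$ be finite alphabets; logarithms are to base $|\mathcal X|$. Let $\mathbf X=\{X_i\}_{i\in\mathbb Z}$ be a random process on $\mathcal X$. Fix $\beta>0$; let $\ell=\ell(n)=\beta\log n$ (rounded to an integer) and $n_\ell:=n-(2\ell-1)$. Let $I(1)\sim\mathrm{Uniform}[n]$ and, conditionally on $I(1)$, let $I(2)$ be uniform on $I(1)+\{-\ell+1,\dots,n-\ell\}$ if $1\le I(1)\le \ell-1$, uniform on $[n]$ if $\ell\le I(1)\le n-\ell+1$, and uniform on $I(1)+\{\ell-n,\dots,\ell-1\}$ if $n-\ell+2\le I(1)\le n$; $(I(1),I(2))$ is independent of $\mathbf X$. Noiseless reads: $X_1^\ell(j):=X_{I(j)}^{I(j)+\ell-1}$, $j=1,2$. Signed overlap: $T:=\max\{0,\ell-(I(2)-I(1))\}$ if $I(2)\ge I(1)$, $T:=-\max\{0,\ell-(I(1)-I(2))\}$ if $I(2)<I(1)$, with values in $\mathcal T:=\{-(\ell-1),\dots,0,\dots,\ell\}$, $\mathbb P[T=0]=n_\ell/n$, $\mathbb P[T=t]=1/n$ for $t\ne0$. Noisy reads $Y_1^\ell(j)\in\mathcal Y^\ell$ are drawn from a kernel $P_{Y_1^\ell\mid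 X_1^\ell}$ given $X_1^\ell(j)$, conditionally independently given the noiseless reads. A detector is any map $\hat T:\mathcal Y^\ell\times\mathcal Y^\ell\to\mathcal T$; $P_{\mathrm{error}}(\hat T):=\mathbb P[\hat T(Y_1^\ell(1),Y_1^\ell(2))\ne T]$, $P^*_{\mathrm{error}}:=\min_{\hat T}P_{\mathrm{error}}(\hat T)$. Noisy setting: $\mathbf X$ is i.i.d. with marginal p.m.f. $P_X$, and $P_{Y_1^\ell\mid X_1^\ell}(y_1^\ell\mid x_1^\ell)=\prod_{i=1}^\ell P_{Y\mid X}(y_i\mid x_i)$ for a fixed channel $P_{Y\mid X}$. Let $P_Y$ be the $Y$-marginal of $P_X\otimes P_{Y\mid X}$, and $P_{Y\tilde Y}(y,\tilde y):=\sum_xP_X(x)P_{Y\mid X}(y\mid x)P_{Y\mid X}(\tilde y\mid x)$ (two independent channel outputs of the same input); $I(Y;\tilde Y)$ is the mutual information under $P_{Y\tilde Y}$. *)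

theory Defs
  imports "HOL-Probability.Probability"
begin

definition readlen :: "nat \<Rightarrow> real \<Rightarrow> nat \<Rightarrow> nat" where
  "readlen q \<beta> n = nat (round (\<beta> * log (real q) (real n)))"

definition I2set :: "nat \<Rightarrow> nat \<Rightarrow> int \<Rightarrow> int set" where
  "I2set n l i1 =
     (if 1 \<le> i1 \<and> i1 \<le> int l - 1 then {i1 - int l + 1 .. i1 + int n - int l}
      else if int l \<le> i1 \<and> i1 \<le> int n - int l + 1 then {1 .. int n}
      else {i1 + int l - int n .. i1 + int l - 1})"

definition overlap :: "nat \<Rightarrow> int \<Rightarrow> int \<Rightarrow> int" where
  "overlap l i1 i2 =
     (if i2 \<ge> i1 then max 0 (int l - (i2 - i1)) else - max 0 (int l - (i1 - i2)))"

definition Tset :: "nat \<Rightarrow> int set" where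
  "Tset l = {-(int l - 1) .. int l}"

definition read :: "nat \<Rightarrow> (int \<Rightarrow> 'x) \<Rightarrow> int \<Rightarrow> 'x list" where
  "read l X i = map (\<lambda>k. X (i + int k)) [0..<l]"

fun chan :: "('x \<Rightarrow> 'y pmf) \<Rightarrow> 'x list \<Rightarrow> 'y list pmf" where
  "chan W [] = return_pmf []"
| "chan W (x # xs) = do { y \<leftarrow> W x; ys \<leftarrow> chan W xs; return_pmf (y # ys) }"

text \<open>The i.i.d. process X is realised on a finite
  window of indices containing every position that can be read; this gives
  exactly the finite-dimensional marginals of the i.i.d. process.\<close>
definition joint :: "'x pmf \<Rightarrow> ('x \<Rightarrow> 'y pmf) \<Rightarrow> nat \<Rightarrow> nat \<Rightarrow> (int \<times> 'y list \<times> 'y list) pmf" where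
  "joint PX W l n = do {
      i1 \<leftarrow> pmf_of_set {1 .. int n};
      i2 \<leftarrow> pmf_of_set (I2set n l i1);
      X \<leftarrow> Pi_pmf {- int n - 2 * int l .. int n + 2 * int l} undefined (\<lambda>_. PX);
      y1 \<leftarrow> chan W (read l X i1);
      y2 \<leftarrow> chan W (read l X i2);
      return_pmf (overlap l i1 i2, y1, y2) }"

definition Perror :: "'x pmf \<Rightarrow> ('x \<Rightarrow> 'y pmf) \<Rightarrow> nat \<Rightarrow> nat \<Rightarrow> ('y list \<Rightarrow> 'y list \<Rightarrow> int) \<Rightarrow> real" where
  "Perror PX W l n g = measure_pmf.prob (joint PX W l n) {(t, y1, y2). g y1 y2 \<noteq> t}"

definition Perror_opt :: "'x::finite pmf \<Rightarrow> ('x \<Rightarrow> 'y pmf) \<Rightarrow> real \<Rightarrow> nat \<Rightarrow> real" where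
  "Perror_opt PX W \<beta> n =
     (let l = readlen CARD('x) \<beta> n in
      INF g \<in> {g. \<forall>a b. g a b \<in> Tset l}. Perror PX W l n g)"

definition PY :: "'x::finite pmf \<Rightarrow> ('x \<Rightarrow> 'y pmf) \<Rightarrow> 'y \<Rightarrow> real" where
  "PY PX W y = (\<Sum>x\<in>UNIV. pmf PX x * pmf (W x) y)"

definition PYY :: "'x::finite pmf \<Rightarrow> ('x \<Rightarrow> 'y pmf) \<Rightarrow> 'y \<Rightarrow> 'y \<Rightarrow> real" where
  "PYY PX W y y' = (\<Sum>x\<in>UNIV. pmf PX x * pmf (W x) y * pmf (W x) y')"

definition MI :: "'x::finite pmf \<Rightarrow> ('x \<Rightarrow> 'y::finite pmf) \<Rightarrow> real" where
  "MI PX W = (\<Sum>y\<in>UNIV. \<Sum>y'\<in>UNIV.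
      (if PYY PX W y y' = 0 then 0
       else PYY PX W y y' * log (real CARD('x)) (PYY PX W y y' / (PY PX W y * PY PX W y'))))"

definition coef :: "real \<Rightarrow> real \<Rightarrow> real" where
  "coef \<beta> I = (if I = 0 then \<beta> else min \<beta> (1 / I))"

end

theory Submission
  imports Defs "HOL-Real_Asymp.Real_Asymp"
begin

text \<open>Realise the noisy reads as the two components of an i.i.d. field of pairs \<open>(Y, Y~)\<close>
  indexed by the positions. For each candidate overlap \<open>t\<close> the detector compares the product of
  likelihood ratios \<open>PYY / (PY PY)\<close> over the aligned symbols with a threshold. At a wrong shift
  the aligned symbols are independent, so the product has mean at most one and false alarms
  are controlled by Markov's inequality; at the true shift its logarithm is a sum of \<open>|t|\<close>
  i.i.d. terms of mean \<open>I(Y; Y~)\<close>, so by Chebyshev it misses only with probability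
  \<open>O(1 / log n)\<close> once \<open>|t| I \<ge> (1 + \<delta>) log n\<close>. The error is then dominated by the
  \<open>2 (1 + \<delta>) log n / I\<close> untested overlaps, each of probability \<open>1/n\<close>. Declaring no overlap
  at all costs only \<open>2 l / n \<approx> 2 \<beta> log n / n\<close>, which gives the other half of the minimum.\<close>

section \<open>Product distributions and the channel\<close>

lemma finite_set_Pi_pmf:
  assumes "finite A" "\<And>x. x \<in> A \<Longrightarrow> finite (set_pmf (p x))"
  shows "finite (set_pmf (Pi_pmf A d p))"
  using assms by (subst set_Pi_pmf) auto

lemma integral_measure_pmf_finite:
  fixes f :: "'a \<Rightarrow> real"
  assumes "finite (set_pmf M)"
  shows "(\<integral>x. f x \<partial>M) = (\<Sum>a\<in>set_pmf M. f a * pmf M a)"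
  using assms by (intro integral_measure_pmf_real) auto

lemma integral_pair_pmf_finite:
  fixes f :: "'a \<times> 'b \<Rightarrow> real"
  assumes "finite (set_pmf A)" "finite (set_pmf B)"
  shows "(\<integral>z. f z \<partial>pair_pmf A B) = (\<integral>a. \<integral>b. f (a, b) \<partial>B \<partial>A)"
proof -
  have "(\<integral>z. f z \<partial>pair_pmf A B) = (\<Sum>z\<in>set_pmf A \<times> set_pmf B. f z * pmf (pair_pmf A B) z)"
    using assms by (subst integral_measure_pmf_finite) auto
  also have "\<dots> = (\<Sum>a\<in>set_pmf A. \<Sum>b\<in>set_pmf B. f (a, b) * (pmf A a * pmf B b))"
    by (simp add: sum.cartesian_product case_prod_beta) (intro sum.cong refl, metis pmf_pair prod.collapse)
  also have "\<dots> = (\<Sum>a\<in>set_pmf A. (\<Sum>b\<in>set_pmf B. f (a, b) * pmf B b) * pmf A a)"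
    by (simp add: sum_distrib_left sum_distrib_right mult_ac)
  also have "\<dots> = (\<integral>a. \<integral>b. f (a, b) \<partial>B \<partial>A)"
    using assms by (simp add: integral_measure_pmf_finite)
  finally show ?thesis .
qed

lemma integral_commute_pmf_finite:
  fixes f :: "'a \<Rightarrow> 'b \<Rightarrow> real"
  assumes "finite (set_pmf A)" "finite (set_pmf B)"
  shows "(\<integral>a. \<integral>b. f a b \<partial>B \<partial>A) = (\<integral>b. \<integral>a. f a b \<partial>A \<partial>B)"
proof -
  have "(\<integral>a. \<integral>b. f a b \<partial>B \<partial>A) = (\<Sum>a\<in>set_pmf A. \<Sum>b\<in>set_pmf B. f a b * pmf B b * pmf A a)"
    using assms by (simp add: integral_measure_pmf_finite sum_distrib_right)
  also have "\<dots> = (\<Sum>b\<in>set_pmf B. \<Sum>a\<in>set_pmf A. f a b * pmf A a * pmf B b)"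
    by (subst sum.swap) (simp add: mult_ac)
  also have "\<dots> = (\<integral>b. \<integral>a. f a b \<partial>A \<partial>B)"
    using assms by (simp add: integral_measure_pmf_finite sum_distrib_right)
  finally show ?thesis .
qed

lemma integral_Pi_pmf_remove:
  fixes \<phi> :: "('a \<Rightarrow> 'b) \<Rightarrow> real"
  assumes "finite S" "v \<in> S" "finite (set_pmf D)"
  shows "(\<integral>Q. \<phi> Q \<partial>Pi_pmf S d (\<lambda>_. D)) =
         (\<integral>Q. (\<integral>z. \<phi> (Q(v := z)) \<partial>D) \<partial>Pi_pmf (S - {v}) d (\<lambda>_. D))"
proof -
  have S: "S = insert v (S - {v})" using assms by auto
  have "Pi_pmf S d (\<lambda>_. D) = map_pmf (\<lambda>(y, f). f(v := y)) (pair_pmf D (Pi_pmf (S - {v}) d (\<lambda>_. D)))"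
    using assms by (subst S, subst Pi_pmf_insert) auto
  then have "(\<integral>Q. \<phi> Q \<partial>Pi_pmf S d (\<lambda>_. D)) = (\<integral>z. \<integral>Q. \<phi> (Q(v := z)) \<partial>Pi_pmf (S - {v}) d (\<lambda>_. D) \<partial>D)"
    using assms by (simp add: integral_pair_pmf_finite finite_set_Pi_pmf case_prod_beta)
  also have "\<dots> = (\<integral>Q. (\<integral>z. \<phi> (Q(v := z)) \<partial>D) \<partial>Pi_pmf (S - {v}) d (\<lambda>_. D))"
    using assms by (intro integral_commute_pmf_finite finite_set_Pi_pmf) auto
  finally show ?thesis .
qed

lemma integral_Pi_pmf_mult_integrate_coordinate:
  fixes G H :: "('a \<Rightarrow> 'b) \<Rightarrow> real"
  assumes "finite S" "v \<in> S" "finite (set_pmf D)" "\<And>Q z. G (Q(v := z)) = G Q"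
  shows "(\<integral>Q. G Q * H Q \<partial>Pi_pmf S d (\<lambda>_. D)) =
         (\<integral>Q. G Q * (\<integral>z. H (Q(v := z)) \<partial>D) \<partial>Pi_pmf S d (\<lambda>_. D))"
proof -
  have "(\<integral>Q. G Q * H Q \<partial>Pi_pmf S d (\<lambda>_. D)) =
        (\<integral>Q. (\<integral>z. G Q * H (Q(v := z)) \<partial>D) \<partial>Pi_pmf (S - {v}) d (\<lambda>_. D))"
    using assms by (subst integral_Pi_pmf_remove[of S v]) auto
  also have "\<dots> = (\<integral>Q. (\<integral>z'. G Q * (\<integral>z. H (Q(v := z)) \<partial>D) \<partial>D) \<partial>Pi_pmf (S - {v}) d (\<lambda>_. D))"
    by simp
  also have "\<dots> = (\<integral>Q. G Q * (\<integral>z. H (Q(v := z)) \<partial>D) \<partial>Pi_pmf S d (\<lambda>_. D))"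
    using assms by (subst integral_Pi_pmf_remove[of S v]) auto
  finally show ?thesis .
qed

lemma integral_Pi_pmf_coordinate:
  fixes h :: "'b \<Rightarrow> real"
  assumes "finite S" "v \<in> S"
  shows "(\<integral>Q. h (Q v) \<partial>Pi_pmf S d (\<lambda>_. D)) = (\<integral>z. h z \<partial>D)"
proof -
  have "(\<integral>Q. h (Q v) \<partial>Pi_pmf S d (\<lambda>_. D)) = (\<integral>z. h z \<partial>map_pmf (\<lambda>Q. Q v) (Pi_pmf S d (\<lambda>_. D)))"
    by simp
  also have "map_pmf (\<lambda>Q. Q v) (Pi_pmf S d (\<lambda>_. D)) = D"
    using assms by (simp add: Pi_pmf_component)
  finally show ?thesis .
qed

lemma measure_bind_pmf:
  "measure_pmf.prob (bind_pmf M N) X = (\<integral>x. measure_pmf.prob (N x) X \<partial>M)"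
proof -
  have "ennreal (measure_pmf.prob (bind_pmf M N) X) = (\<integral>\<^sup>+x. ennreal (measure_pmf.prob (N x) X) \<partial>M)"
    by (simp add: measure_pmf.emeasure_eq_measure[symmetric])
  also have "\<dots> = ennreal (\<integral>x. measure_pmf.prob (N x) X \<partial>M)"
    by (intro nn_integral_eq_integral measure_pmf.integrable_const_bound[where B=1]) auto
  finally show ?thesis by (simp add: integral_nonneg)
qed

lemma prob_ge_le_integral_div:
  fixes u :: "'a \<Rightarrow> real"
  assumes "\<And>x. u x \<ge> 0" "finite (set_pmf M)" "c > 0"
  shows "measure_pmf.prob M {x. c \<le> u x} \<le> (\<integral>x. u x \<partial>M) / c"
  using integral_Markov_inequality_measure[of M u UNIV c] assms
  by (auto intro: integrable_measure_pmf_finite)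

lemma chan_map_eq_Pi_pmf_set:
  assumes "distinct ps"
  shows "chan W (map X ps) = map_pmf (\<lambda>Z. map Z ps) (Pi_pmf (set ps) d (\<lambda>p. W (X p)))"
  using assms
proof (induction ps)
  case Nil
  then show ?case by simp
next
  case (Cons p ps)
  have "Pi_pmf (set (p # ps)) d (\<lambda>p. W (X p)) =
        do {y \<leftarrow> W (X p); f \<leftarrow> Pi_pmf (set ps) d (\<lambda>p. W (X p)); return_pmf (f(p := y))}"
    using Cons.prems by (simp add: Pi_pmf_insert')
  then have "map_pmf (\<lambda>Z. map Z (p # ps)) (Pi_pmf (set (p # ps)) d (\<lambda>p. W (X p))) =
        do {y \<leftarrow> W (X p); ys \<leftarrow> map_pmf (\<lambda>Z. map Z ps) (Pi_pmf (set ps) d (\<lambda>p. W (X p)));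
            return_pmf (y # ys)}"
    using Cons.prems by (simp add: map_bind_pmf map_return_pmf bind_map_pmf)
  also have "\<dots> = chan W (map X (p # ps))"
    using Cons by simp
  finally show ?case by simp
qed

lemma chan_map_eq_Pi_pmf:
  assumes "distinct ps" "finite S" "set ps \<subseteq> S"
  shows "chan W (map X ps) = map_pmf (\<lambda>Z. map Z ps) (Pi_pmf S d (\<lambda>p. W (X p)))"
  using assms
  by (subst chan_map_eq_Pi_pmf_set, simp, subst Pi_pmf_subset[of S])
     (auto simp: pmf.map_comp o_def intro!: map_pmf_cong)

lemma Pi_pmf_pair_pmf:
  assumes "finite S"
  shows "Pi_pmf S dq (\<lambda>p. pair_pmf (A p) (B p)) =
     do {f \<leftarrow> Pi_pmf S d1 A; g \<leftarrow> Pi_pmf S d2 B; return_pmf (\<lambda>p. if p \<in> S then (f p, g p) else dq)}"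
proof -
  have "Pi_pmf S dq (\<lambda>p. pair_pmf (A p) (B p)) =
     Pi_pmf S dq (\<lambda>p. bind_pmf (A p) (\<lambda>a. bind_pmf (B p) (\<lambda>b. return_pmf (a, b))))"
    by (simp add: pair_pmf_def)
  also have "\<dots> = do {f \<leftarrow> Pi_pmf S d1 A; g \<leftarrow> Pi_pmf S d2 B; Pi_pmf S dq (\<lambda>p. return_pmf (f p, g p))}"
    using assms by (subst Pi_pmf_bind[where d'=d1], simp, subst Pi_pmf_bind[where d'=d2]) auto
  finally show ?thesis using assms by simp
qed

section \<open>Statistics of two outputs of the same input\<close>

definition PYY_pmf :: "'x pmf \<Rightarrow> ('x \<Rightarrow> 'y pmf) \<Rightarrow> ('y \<times> 'y) pmf" where
  "PYY_pmf PX W = bind_pmf PX (\<lambda>x. pair_pmf (W x) (W x))"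

text \<open>Each read sends every position through the channel independently, so the two reads see the
  first and second components of an i.i.d. field of \<open>PYY_pmf\<close>-samples.\<close>
lemma noisy_reads_eq_map_Pi_PYY_pmf:
  assumes "finite S" "distinct ps1" "distinct ps2" "set ps1 \<subseteq> S" "set ps2 \<subseteq> S"
  shows "do {X \<leftarrow> Pi_pmf S dx (\<lambda>_. PX); y1 \<leftarrow> chan W (map X ps1); y2 \<leftarrow> chan W (map X ps2);
             return_pmf (y1, y2)}
       = map_pmf (\<lambda>Q. (map (\<lambda>p. fst (Q p)) ps1, map (\<lambda>p. snd (Q p)) ps2)) (Pi_pmf S dq (\<lambda>_. PYY_pmf PX W))"
proof -
  have "Pi_pmf S dq (\<lambda>_. PYY_pmf PX W) =
        do {X \<leftarrow> Pi_pmf S dx (\<lambda>_. PX); Pi_pmf S dq (\<lambda>p. pair_pmf (W (X p)) (W (X p)))}"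
    unfolding PYY_pmf_def using assms(1) by (subst Pi_pmf_bind[where d'=dx]) auto
  also have "\<dots> = do {X \<leftarrow> Pi_pmf S dx (\<lambda>_. PX); f \<leftarrow> Pi_pmf S undefined (\<lambda>p. W (X p));
       g \<leftarrow> Pi_pmf S undefined (\<lambda>p. W (X p)); return_pmf (\<lambda>p. if p \<in> S then (f p, g p) else dq)}"
    using Pi_pmf_pair_pmf[OF assms(1), of dq "\<lambda>p. W (X p)" "\<lambda>p. W (X p)" undefined undefined for X]
    by simp
  finally have Pi_eq: "Pi_pmf S dq (\<lambda>_. PYY_pmf PX W) = \<dots>" .
  show ?thesis
    unfolding Pi_eq using assms
    by (simp add: chan_map_eq_Pi_pmf[where d=undefined and S=S] map_bind_pmf bind_map_pmf
        map_return_pmf subset_iff cong: map_cong)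
qed

lemma pmf_PYY_pmf: "pmf (PYY_pmf PX W) (a, b) = PYY PX W a b"
  unfolding PYY_pmf_def PYY_def pmf_bind pmf_pair
  by (subst integral_measure_pmf_real[where A=UNIV]) (auto simp: mult_ac)

lemma finite_set_PYY_pmf: "finite (set_pmf (PYY_pmf PX (W :: 'x::finite \<Rightarrow> 'y::finite pmf)))"
  by (rule finite_subset[of _ UNIV]) auto

lemma integral_PYY_pmf:
  fixes PX :: "'x::finite pmf" and W :: "'x \<Rightarrow> 'y::finite pmf"
  shows "(\<integral>z. \<phi> z \<partial>PYY_pmf PX W) = (\<Sum>a\<in>UNIV. \<Sum>b\<in>UNIV. PYY PX W a b * \<phi> (a, b))"
proof -
  have "(\<integral>z. \<phi> z \<partial>PYY_pmf PX W) = (\<Sum>z\<in>UNIV. \<phi> z * pmf (PYY_pmf PX W) z)"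
    by (subst integral_measure_pmf_real[where A=UNIV]) auto
  also have "\<dots> = (\<Sum>a\<in>UNIV. \<Sum>b\<in>UNIV. \<phi> (a, b) * pmf (PYY_pmf PX W) (a, b))"
    by (simp add: sum.cartesian_product)
  finally show ?thesis by (simp add: pmf_PYY_pmf mult_ac)
qed

lemma PYY_nonneg: "PYY PX W a b \<ge> 0"
  unfolding PYY_def by (intro sum_nonneg mult_nonneg_nonneg) auto

lemma PYY_commute: "PYY PX W a b = PYY PX W b a"
  unfolding PYY_def by (simp add: mult_ac)

lemma PY_nonneg: "PY PX W a \<ge> 0"
  unfolding PY_def by (intro sum_nonneg mult_nonneg_nonneg) auto

lemma sum_PY:
  fixes W :: "'x::finite \<Rightarrow> 'y::finite pmf"
  shows "(\<Sum>a\<in>UNIV. PY PX W a) = 1"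
proof -
  have "(\<Sum>a\<in>UNIV. PY PX W a) = (\<Sum>x\<in>UNIV. pmf PX x * (\<Sum>a\<in>UNIV. pmf (W x) a))"
    unfolding PY_def by (subst sum.swap) (simp add: sum_distrib_left)
  then show ?thesis by (simp add: sum_pmf_eq_1)
qed

lemma sum_PYY_right:
  fixes W :: "'x::finite \<Rightarrow> 'y::finite pmf"
  shows "(\<Sum>b\<in>UNIV. PYY PX W a b) = PY PX W a"
proof -
  have "(\<Sum>b\<in>UNIV. PYY PX W a b) = (\<Sum>x\<in>UNIV. pmf PX x * pmf (W x) a * (\<Sum>b\<in>UNIV. pmf (W x) b))"
    unfolding PYY_def by (subst sum.swap) (simp add: sum_distrib_left)
  then show ?thesis
    unfolding PY_def by (simp add: sum_pmf_eq_1)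
qed

lemma sum_PYY_left:
  fixes W :: "'x::finite \<Rightarrow> 'y::finite pmf"
  shows "(\<Sum>a\<in>UNIV. PYY PX W a b) = PY PX W b"
  by (subst PYY_commute) (rule sum_PYY_right)

lemma PYY_le_PY:
  fixes W :: "'x::finite \<Rightarrow> 'y::finite pmf"
  shows "PYY PX W a b \<le> PY PX W a"
  by (subst sum_PYY_right[symmetric], rule member_le_sum) (auto simp: PYY_nonneg)

lemma PY_pos_if_PYY_pos:
  fixes W :: "'x::finite \<Rightarrow> 'y::finite pmf"
  assumes "PYY PX W a b > 0"
  shows "PY PX W a > 0" "PY PX W b > 0"
  using assms PYY_le_PY[of PX W a b] PYY_le_PY[of PX W b a] PYY_commute[of PX W a b] by linarith+

definition likelihood_ratio :: "'x::finite pmf \<Rightarrow> ('x \<Rightarrow> 'y pmf) \<Rightarrow> 'y \<Rightarrow> 'y \<Rightarrow> real" where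
  "likelihood_ratio PX W a b = PYY PX W a b / (PY PX W a * PY PX W b)"

lemma likelihood_ratio_nonneg: "likelihood_ratio PX W a b \<ge> 0"
  unfolding likelihood_ratio_def by (intro divide_nonneg_nonneg mult_nonneg_nonneg PYY_nonneg PY_nonneg)

lemma likelihood_ratio_commute: "likelihood_ratio PX W a b = likelihood_ratio PX W b a"
  unfolding likelihood_ratio_def by (simp add: PYY_commute mult_ac)

text \<open>Under independent \<open>Y\<close> and \<open>Y~\<close> the likelihood ratio has mean at most one; here one of
  its arguments is fixed and the other is drawn from its marginal.\<close>
lemma integral_likelihood_ratio_snd_le_1:
  fixes PX :: "'x::finite pmf" and W :: "'x \<Rightarrow> 'y::finite pmf"
  shows "(\<integral>z. likelihood_ratio PX W c (snd z) \<partial>PYY_pmf PX W) \<le> 1"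
proof -
  have "(\<integral>z. likelihood_ratio PX W c (snd z) \<partial>PYY_pmf PX W) =
        (\<Sum>b\<in>UNIV. PY PX W b * likelihood_ratio PX W c b)"
    by (simp add: integral_PYY_pmf, subst sum.swap) (simp add: sum_PYY_left flip: sum_distrib_right)
  also have "\<dots> \<le> (\<Sum>b\<in>UNIV. PYY PX W c b / PY PX W c)"
  proof (intro sum_mono)
    fix b
    show "PY PX W b * likelihood_ratio PX W c b \<le> PYY PX W c b / PY PX W c"
      using PY_nonneg[of PX W b] PYY_nonneg[of PX W c b] PY_nonneg[of PX W c]
      by (cases "PY PX W b = 0") (auto simp: likelihood_ratio_def field_simps)
  qed
  also have "\<dots> = PY PX W c / PY PX W c"
    by (simp add: sum_PYY_right flip: sum_divide_distrib)
  also have "\<dots> \<le> 1" by (cases "PY PX W c = 0") auto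
  finally show ?thesis .
qed

lemma integral_likelihood_ratio_fst_le_1:
  fixes PX :: "'x::finite pmf" and W :: "'x \<Rightarrow> 'y::finite pmf"
  shows "(\<integral>z. likelihood_ratio PX W (fst z) c \<partial>PYY_pmf PX W) \<le> 1"
proof -
  have "(\<integral>z. likelihood_ratio PX W (fst z) c \<partial>PYY_pmf PX W) =
        (\<integral>z. likelihood_ratio PX W c (snd z) \<partial>PYY_pmf PX W)"
    by (simp add: integral_PYY_pmf likelihood_ratio_commute[of _ _ c])
       (subst sum.swap, simp add: PYY_commute)
  then show ?thesis using integral_likelihood_ratio_snd_le_1 by simp
qed

lemma likelihood_ratio_pos:
  fixes PX :: "'x::finite pmf" and W :: "'x \<Rightarrow> 'y::finite pmf"
  assumes "z \<in> set_pmf (PYY_pmf PX W)"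
  shows "likelihood_ratio PX W (fst z) (snd z) > 0"
proof -
  obtain a b where z: "z = (a, b)" by (cases z)
  have "PYY PX W a b > 0"
    using assms pmf_PYY_pmf[of PX W a b] PYY_nonneg[of PX W a b] unfolding z
    by (metis pmf_positive less_eq_real_def)
  then show ?thesis using PY_pos_if_PYY_pos[of PX W a b] by (simp add: z likelihood_ratio_def)
qed

lemma MI_eq_integral_log_likelihood_ratio:
  fixes PX :: "'x::finite pmf" and W :: "'x \<Rightarrow> 'y::finite pmf"
  shows "(\<integral>z. log (real CARD('x)) (likelihood_ratio PX W (fst z) (snd z)) \<partial>PYY_pmf PX W) = MI PX W"
  unfolding MI_def integral_PYY_pmf likelihood_ratio_def by (intro sum.cong refl) auto

lemma diff_le_mult_ln_div:
  fixes p r :: real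
  assumes "p > 0" "r > 0"
  shows "p - r \<le> p * ln (p / r)"
proof -
  have "ln (r / p) \<le> r / p - 1" using assms by (intro ln_le_minus_one) auto
  moreover have "ln (p / r) = - ln (r / p)" using assms by (simp add: ln_div)
  ultimately have "p * (1 - r / p) \<le> p * ln (p / r)" using assms(1) by (intro mult_left_mono) auto
  moreover have "p * (1 - r / p) = p - r" using assms(1) by (simp add: field_simps)
  ultimately show ?thesis by simp
qed

text \<open>Gibbs' inequality: every summand of \<open>MI\<close> dominates \<open>(PYY - PY PY) / ln q\<close>, and these
  lower bounds sum to zero.\<close>
lemma MI_nonneg:
  fixes PX :: "'x::finite pmf" and W :: "'x \<Rightarrow> 'y::finite pmf"
  assumes "CARD('x) \<ge> 2"
  shows "MI PX W \<ge> 0"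
proof -
  let ?q = "real CARD('x)"
  have lnq: "ln ?q > 0" using assms by simp
  have summand_ge: "(PYY PX W a b - PY PX W a * PY PX W b) / ln ?q \<le>
      (if PYY PX W a b = 0 then 0
       else PYY PX W a b * log ?q (PYY PX W a b / (PY PX W a * PY PX W b)))" for a b
  proof (cases "PYY PX W a b = 0")
    case True
    then show ?thesis
      using PY_nonneg[of PX W a] PY_nonneg[of PX W b] lnq by (simp add: divide_nonpos_pos)
  next
    case False
    then have p: "PYY PX W a b > 0" using PYY_nonneg[of PX W a b] by simp
    have r: "PY PX W a * PY PX W b > 0" using PY_pos_if_PYY_pos[OF p] by simp
    show ?thesis
      using False diff_le_mult_ln_div[OF p r] lnq by (simp add: log_def divide_right_mono)
  qed
  have "(\<Sum>a\<in>UNIV. \<Sum>b\<in>UNIV. (PYY PX W a b - PY PX W a * PY PX W b) / ln ?q) =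
      ((\<Sum>a\<in>UNIV. \<Sum>b\<in>UNIV. PYY PX W a b) - (\<Sum>a\<in>UNIV. PY PX W a) * (\<Sum>b\<in>UNIV. PY PX W b)) / ln ?q"
    by (simp add: sum_subtractf sum_product flip: sum_divide_distrib)
  also have "\<dots> = 0" by (simp add: sum_PYY_right sum_PY)
  finally show ?thesis
    unfolding MI_def by (metis (no_types, lifting) summand_ge sum_mono)
qed

definition info_variance :: "'x::finite pmf \<Rightarrow> ('x \<Rightarrow> 'y::finite pmf) \<Rightarrow> real" where
  "info_variance PX W = (\<integral>z. (log (real CARD('x)) (likelihood_ratio PX W (fst z) (snd z)) - MI PX W)\<^sup>2
     \<partial>PYY_pmf PX W)"

lemma info_variance_nonneg: "info_variance PX W \<ge> 0"
  unfolding info_variance_def by (intro integral_nonneg_AE) auto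

section \<open>Products along aligned windows\<close>

text \<open>With \<open>a \<noteq> b\<close>, the last factor always involves a coordinate (\<open>b + L\<close> or \<open>a + L\<close>) on which
  the earlier factors do not depend, so it can be integrated out against its marginal.\<close>
lemma integral_Pi_pmf_prod_shifted_le_1:
  fixes f :: "'b \<Rightarrow> 'b \<Rightarrow> real" and D :: "('b \<times> 'b) pmf" and a b :: int
  assumes S: "finite S" and D: "finite (set_pmf D)" and f_nonneg: "\<And>x y. f x y \<ge> 0"
    and snd_le: "\<And>c. (\<integral>z. f c (snd z) \<partial>D) \<le> 1" and fst_le: "\<And>c. (\<integral>z. f (fst z) c \<partial>D) \<le> 1"
    and "a \<noteq> b" and window: "\<forall>j<L. a + int j \<in> S \<and> b + int j \<in> S"
  shows "(\<integral>Q. (\<Prod>j<L. f (fst (Q (a + int j))) (snd (Q (b + int j)))) \<partial>Pi_pmf S d (\<lambda>_. D)) \<le> 1"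
  using window
proof (induction L)
  case 0
  then show ?case by simp
next
  case (Suc L)
  let ?M = "Pi_pmf S d (\<lambda>_. D)"
  let ?G = "\<lambda>Q. (\<Prod>j<L. f (fst (Q (a + int j))) (snd (Q (b + int j))))"
  have finM: "finite (set_pmf ?M)" using S D by (intro finite_set_Pi_pmf) auto
  have G_nonneg: "?G Q \<ge> 0" for Q by (intro prod_nonneg) (auto intro: f_nonneg)
  have IH: "(\<integral>Q. ?G Q \<partial>?M) \<le> 1" using Suc by auto
  have "(\<integral>Q. ?G Q * f (fst (Q (a + int L))) (snd (Q (b + int L))) \<partial>?M) \<le> (\<integral>Q. ?G Q \<partial>?M)"
  proof (cases "a < b")
    case True
    let ?v = "b + int L"
    have G_upd: "?G (Q(?v := z)) = ?G Q" for Q z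
      using True by (intro prod.cong) auto
    have "(\<integral>Q. ?G Q * f (fst (Q (a + int L))) (snd (Q ?v)) \<partial>?M) =
          (\<integral>Q. ?G Q * (\<integral>z. f (fst (Q (a + int L))) (snd z) \<partial>D) \<partial>?M)"
      using True Suc.prems integral_Pi_pmf_mult_integrate_coordinate[where G = ?G
          and H = "\<lambda>Q. f (fst (Q (a + int L))) (snd (Q ?v))", OF S _ D G_upd]
      by simp
    also have "\<dots> \<le> (\<integral>Q. ?G Q \<partial>?M)"
      by (intro integral_mono integrable_measure_pmf_finite finM)
         (auto intro: mult_left_le snd_le G_nonneg)
    finally show ?thesis .
  next
    case False
    let ?v = "a + int L"
    have G_upd: "?G (Q(?v := z)) = ?G Q" for Q z
      using False \<open>a \<noteq> b\<close> by (intro prod.cong) auto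
    have "(\<integral>Q. ?G Q * f (fst (Q ?v)) (snd (Q (b + int L))) \<partial>?M) =
          (\<integral>Q. ?G Q * (\<integral>z. f (fst z) (snd (Q (b + int L))) \<partial>D) \<partial>?M)"
      using False \<open>a \<noteq> b\<close> Suc.prems integral_Pi_pmf_mult_integrate_coordinate[where G = ?G
          and H = "\<lambda>Q. f (fst (Q ?v)) (snd (Q (b + int L)))", OF S _ D G_upd]
      by simp
    also have "\<dots> \<le> (\<integral>Q. ?G Q \<partial>?M)"
      by (intro integral_mono integrable_measure_pmf_finite finM)
         (auto intro: mult_left_le fst_le G_nonneg)
    finally show ?thesis .
  qed
  then show ?case using IH by simp
qed

lemma integral_Pi_pmf_centered_sum_sq:
  fixes \<psi> :: "'b \<Rightarrow> real" and D :: "'b pmf" and a :: int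
  assumes S: "finite S" and D: "finite (set_pmf D)" and window: "\<forall>j<L. a + int j \<in> S"
  defines "\<mu> \<equiv> (\<integral>z. \<psi> z \<partial>D)"
  shows "(\<integral>Q. (\<Sum>j<L. \<psi> (Q (a + int j)) - \<mu>)\<^sup>2 \<partial>Pi_pmf S d (\<lambda>_. D)) = real L * (\<integral>z. (\<psi> z - \<mu>)\<^sup>2 \<partial>D)"
  using window
proof (induction L)
  case 0
  then show ?case by simp
next
  case (Suc L)
  let ?M = "Pi_pmf S d (\<lambda>_. D)"
  let ?A = "\<lambda>Q. (\<Sum>j<L. \<psi> (Q (a + int j)) - \<mu>)"
  let ?v = "a + int L"
  have finM: "finite (set_pmf ?M)" using S D by (intro finite_set_Pi_pmf) auto
  have v: "?v \<in> S" using Suc.prems by auto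
  have IH: "(\<integral>Q. (?A Q)\<^sup>2 \<partial>?M) = real L * (\<integral>z. (\<psi> z - \<mu>)\<^sup>2 \<partial>D)" using Suc by auto
  have A_upd: "?A (Q(?v := z)) = ?A Q" for Q z by (intro sum.cong) auto
  have cross: "(\<integral>Q. ?A Q * (\<psi> (Q ?v) - \<mu>) \<partial>?M) = 0"
    using D integral_Pi_pmf_mult_integrate_coordinate[where G = ?A
        and H = "\<lambda>Q. \<psi> (Q ?v) - \<mu>", OF S v D A_upd]
    by (simp add: integrable_measure_pmf_finite \<mu>_def)
  have sq: "(\<integral>Q. (\<psi> (Q ?v) - \<mu>)\<^sup>2 \<partial>?M) = (\<integral>z. (\<psi> z - \<mu>)\<^sup>2 \<partial>D)"
    using S v by (rule integral_Pi_pmf_coordinate)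
  have expand: "(\<Sum>j<Suc L. \<psi> (Q (a + int j)) - \<mu>)\<^sup>2 =
      (?A Q)\<^sup>2 + 2 * (?A Q * (\<psi> (Q ?v) - \<mu>)) + (\<psi> (Q ?v) - \<mu>)\<^sup>2" for Q
    by (simp add: power2_eq_square algebra_simps)
  have "(\<integral>Q. (\<Sum>j<Suc L. \<psi> (Q (a + int j)) - \<mu>)\<^sup>2 \<partial>?M) =
      (\<integral>Q. (?A Q)\<^sup>2 \<partial>?M) + 2 * (\<integral>Q. ?A Q * (\<psi> (Q ?v) - \<mu>) \<partial>?M) + (\<integral>Q. (\<psi> (Q ?v) - \<mu>)\<^sup>2 \<partial>?M)"
    unfolding expand by (simp add: integrable_measure_pmf_finite[OF finM])
  also have "\<dots> = real (Suc L) * (\<integral>z. (\<psi> z - \<mu>)\<^sup>2 \<partial>D)"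
    using IH cross sq by (simp add: algebra_simps)
  finally show ?case .
qed

text \<open>Chebyshev: the product falls below \<open>q powr \<gamma>\<close> only if the sum of the logarithms deviates
  from its mean \<open>L \<mu>\<close> by at least \<open>L \<mu> - \<gamma>\<close>.\<close>
lemma prob_Pi_pmf_prod_less_powr_le:
  fixes f :: "'b \<Rightarrow> real" and D :: "'b pmf" and a :: int and q \<gamma> :: real
  assumes S: "finite S" and D: "finite (set_pmf D)" and pos: "\<And>z. z \<in> set_pmf D \<Longrightarrow> f z > 0"
    and q: "q > 1" and window: "\<forall>j<L. a + int j \<in> S"
  defines "\<mu> \<equiv> (\<integral>z. log q (f z) \<partial>D)"
  assumes gap: "real L * \<mu> - \<gamma> > 0"
  shows "measure_pmf.prob (Pi_pmf S d (\<lambda>_. D)) {Q. (\<Prod>j<L. f (Q (a + int j))) < q powr \<gamma>}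
     \<le> real L * (\<integral>z. (log q (f z) - \<mu>)\<^sup>2 \<partial>D) / (real L * \<mu> - \<gamma>)\<^sup>2"
proof -
  let ?M = "Pi_pmf S d (\<lambda>_. D)"
  let ?X = "\<lambda>Q. (\<Sum>j<L. log q (f (Q (a + int j))) - \<mu>)"
  let ?E = "{Q. (\<Prod>j<L. f (Q (a + int j))) < q powr \<gamma>}"
  have finM: "finite (set_pmf ?M)" using S D by (intro finite_set_Pi_pmf) auto
  have sub: "?E \<inter> set_pmf ?M \<subseteq> {Q \<in> space ?M. \<bar>?X Q\<bar> \<ge> real L * \<mu> - \<gamma>}"
  proof
    fix Q assume Q: "Q \<in> ?E \<inter> set_pmf ?M"
    have f_pos: "f (Q (a + int j)) > 0" if "j < L" for j
      using Q window that S pos by (auto simp: set_Pi_pmf PiE_dflt_def)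
    have "log q (\<Prod>j<L. f (Q (a + int j))) < log q (q powr \<gamma>)"
      using Q q f_pos by (intro log_less prod_pos) auto
    also have "log q (\<Prod>j<L. f (Q (a + int j))) = (\<Sum>j<L. log q (f (Q (a + int j))))"
    proof -
      have "ln (\<Prod>j<L. f (Q (a + int j))) = (\<Sum>j<L. ln (f (Q (a + int j))))"
        using f_pos by (intro ln_prod) (auto dest: less_imp_neq[symmetric])
      then show ?thesis by (simp add: log_def sum_divide_distrib)
    qed
    finally have "(\<Sum>j<L. log q (f (Q (a + int j)))) < \<gamma>" using q by simp
    then show "Q \<in> {Q \<in> space ?M. \<bar>?X Q\<bar> \<ge> real L * \<mu> - \<gamma>}" by (simp add: sum_subtractf)
  qed
  have "measure_pmf.prob ?M ?E = measure_pmf.prob ?M (?E \<inter> set_pmf ?M)"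
    by (simp add: measure_Int_set_pmf)
  also have "\<dots> \<le> measure_pmf.prob ?M {Q \<in> space ?M. \<bar>?X Q\<bar> \<ge> real L * \<mu> - \<gamma>}"
    using sub by (intro measure_pmf.finite_measure_mono) auto
  also have "\<dots> \<le> (\<integral>Q. (?X Q)\<^sup>2 \<partial>?M) / (real L * \<mu> - \<gamma>)\<^sup>2"
    using gap by (intro measure_pmf.second_moment_method integrable_measure_pmf_finite finM) auto
  also have "(\<integral>Q. (?X Q)\<^sup>2 \<partial>?M) = real L * (\<integral>z. (log q (f z) - \<mu>)\<^sup>2 \<partial>D)"
    unfolding \<mu>_def by (rule integral_Pi_pmf_centered_sum_sq[OF S D window])
  finally show ?thesis .
qed

section \<open>The threshold detector\<close>

text \<open>The likelihood ratio of the hypothesis \<open>T = t\<close> against independence: for \<open>t > 0\<close> the last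
  \<open>t\<close> symbols of the first read are aligned with the first \<open>t\<close> symbols of the second, for
  \<open>t < 0\<close> the roles of the reads are exchanged.\<close>
definition score :: "'x::finite pmf \<Rightarrow> ('x \<Rightarrow> 'y pmf) \<Rightarrow> nat \<Rightarrow> int \<Rightarrow> 'y list \<Rightarrow> 'y list \<Rightarrow> real" where
  "score PX W l t y1 y2 =
     (if 0 < t then (\<Prod>j<nat t. likelihood_ratio PX W (y1 ! (l - nat t + j)) (y2 ! j))
      else (\<Prod>j<nat (-t). likelihood_ratio PX W (y1 ! j) (y2 ! (l - nat (-t) + j))))"

definition threshold_detector ::
    "'x::finite pmf \<Rightarrow> ('x \<Rightarrow> 'y pmf) \<Rightarrow> nat \<Rightarrow> int set \<Rightarrow> real \<Rightarrow> 'y list \<Rightarrow> 'y list \<Rightarrow> int" where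
  "threshold_detector PX W l C \<theta> y1 y2 =
     (if \<exists>t\<in>C. \<theta> \<le> score PX W l t y1 y2 then (SOME t. t \<in> C \<and> \<theta> \<le> score PX W l t y1 y2) else 0)"

definition field_reads :: "nat \<Rightarrow> int \<Rightarrow> int \<Rightarrow> (int \<Rightarrow> 'y \<times> 'y) \<Rightarrow> 'y list \<times> 'y list" where
  "field_reads l i1 i2 Q =
     (map (\<lambda>k. fst (Q (i1 + int k))) [0..<l], map (\<lambda>k. snd (Q (i2 + int k))) [0..<l])"

text \<open>Under the hypothesis \<open>T = t\<close>, the aligned segments of the two reads start at these positions.\<close>
definition align_start1 :: "nat \<Rightarrow> int \<Rightarrow> int \<Rightarrow> int" where
  "align_start1 l i1 t = (if 0 < t then i1 + int l - t else i1)"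

definition align_start2 :: "nat \<Rightarrow> int \<Rightarrow> int \<Rightarrow> int" where
  "align_start2 l i2 t = (if 0 < t then i2 else i2 + int l + t)"

lemma score_field_reads:
  assumes "t \<in> Tset l" "t \<noteq> 0"
  shows "score PX W l t (fst (field_reads l i1 i2 Q)) (snd (field_reads l i1 i2 Q)) =
     (\<Prod>j<nat \<bar>t\<bar>. likelihood_ratio PX W (fst (Q (align_start1 l i1 t + int j)))
        (snd (Q (align_start2 l i2 t + int j))))"
proof (cases "0 < t")
  case True
  then have "nat t \<le> l" using assms(1) by (auto simp: Tset_def)
  with True show ?thesis
    unfolding score_def field_reads_def
    by (auto intro!: prod.cong simp: align_start1_def align_start2_def of_nat_diff algebra_simps)
next
  case False
  then have "t < 0" "nat (-t) \<le> l" using assms by (auto simp: Tset_def)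
  then show ?thesis
    unfolding score_def field_reads_def
    by (auto intro!: prod.cong simp: align_start1_def align_start2_def of_nat_diff algebra_simps)
qed

lemma overlap_in_Tset: "l > 0 \<Longrightarrow> overlap l i1 i2 \<in> Tset l"
  unfolding overlap_def Tset_def by auto

lemma align_start_eq_iff:
  assumes "t \<in> Tset l" "t \<noteq> 0"
  shows "align_start1 l i1 t = align_start2 l i2 t \<longleftrightarrow> overlap l i1 i2 = t"
  using assms unfolding align_start1_def align_start2_def overlap_def Tset_def by auto

lemma aligned_segments_in_window:
  assumes "t \<in> Tset l" "t \<noteq> 0" "\<forall>k<l. i1 + int k \<in> S \<and> i2 + int k \<in> S"
  shows "\<forall>j<nat \<bar>t\<bar>. align_start1 l i1 t + int j \<in> S \<and> align_start2 l i2 t + int j \<in> S"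
proof (intro allI impI)
  fix j assume j: "j < nat \<bar>t\<bar>"
  show "align_start1 l i1 t + int j \<in> S \<and> align_start2 l i2 t + int j \<in> S"
  proof (cases "0 < t")
    case True
    then have "nat t \<le> l" using assms(1) by (auto simp: Tset_def)
    then have "l - nat t + j < l" "j < l" using j True by auto
    then have "i1 + int (l - nat t + j) \<in> S" "i2 + int j \<in> S" using assms(3) by auto
    then show ?thesis using True \<open>nat t \<le> l\<close>
      by (simp add: align_start1_def align_start2_def of_nat_diff algebra_simps)
  next
    case False
    then have "t < 0" "nat (-t) \<le> l" using assms(1,2) by (auto simp: Tset_def)
    then have "j < l" "l - nat (-t) + j < l" using j by auto
    then have "i1 + int j \<in> S" "i2 + int (l - nat (-t) + j) \<in> S" using assms(3) by auto
    then show ?thesis using \<open>t < 0\<close> \<open>nat (-t) \<le> l\<close>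
      by (simp add: align_start1_def align_start2_def of_nat_diff algebra_simps)
  qed
qed

lemma threshold_detector_in_Tset:
  assumes "C \<subseteq> Tset l" "l > 0"
  shows "threshold_detector PX W l C \<theta> a b \<in> Tset l"
proof (cases "\<exists>t\<in>C. \<theta> \<le> score PX W l t a b")
  case True
  then have "(SOME t. t \<in> C \<and> \<theta> \<le> score PX W l t a b) \<in> C" by (metis (mono_tags) someI_ex)
  then show ?thesis using True assms unfolding threshold_detector_def by auto
next
  case False
  then show ?thesis using assms unfolding threshold_detector_def Tset_def by auto
qed

lemma threshold_detector_errorE:
  assumes "threshold_detector PX W l C \<theta> y1 y2 \<noteq> t" "t \<in> Tset l"
  obtains "t \<in> Tset l - {0} - C"
    | "t \<in> C" "score PX W l t y1 y2 < \<theta>"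
    | s where "s \<in> C - {t}" "\<theta> \<le> score PX W l s y1 y2"
proof (cases "\<exists>s\<in>C. \<theta> \<le> score PX W l s y1 y2")
  case True
  then have "(SOME s. s \<in> C \<and> \<theta> \<le> score PX W l s y1 y2) \<in> C \<and>
      \<theta> \<le> score PX W l (SOME s. s \<in> C \<and> \<theta> \<le> score PX W l s y1 y2) y1 y2"
    by (metis (mono_tags) someI_ex)
  then show ?thesis using that assms True unfolding threshold_detector_def by auto
next
  case False
  then show ?thesis using that assms unfolding threshold_detector_def by force
qed

context
  fixes PX :: "'x::finite pmf" and W :: "'x \<Rightarrow> 'y::finite pmf" and l :: nat and i1 i2 :: int
    and S :: "int set"
  assumes S: "finite S" and window: "\<forall>k<l. i1 + int k \<in> S \<and> i2 + int k \<in> S"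
begin

private abbreviation "field \<equiv> Pi_pmf S undefined (\<lambda>_. PYY_pmf PX W)"
private abbreviation "field_score t Q \<equiv>
  score PX W l t (fst (field_reads l i1 i2 Q)) (snd (field_reads l i1 i2 Q))"

lemma prob_score_below_true_overlap:
  assumes "CARD('x) \<ge> 2" "t \<in> Tset l" "t \<noteq> 0" "overlap l i1 i2 = t"
    and gap: "real (nat \<bar>t\<bar>) * MI PX W - \<gamma> > 0"
  shows "measure_pmf.prob field {Q. field_score t Q < real CARD('x) powr \<gamma>}
    \<le> real (nat \<bar>t\<bar>) * info_variance PX W / (real (nat \<bar>t\<bar>) * MI PX W - \<gamma>)\<^sup>2"
proof -
  let ?q = "real CARD('x)"
  have start: "align_start1 l i1 t = align_start2 l i2 t"
    using align_start_eq_iff[OF assms(2,3)] assms(4) by simp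
  have "{Q. field_score t Q < ?q powr \<gamma>} = {Q. (\<Prod>j<nat \<bar>t\<bar>.
      (\<lambda>z. likelihood_ratio PX W (fst z) (snd z)) (Q (align_start1 l i1 t + int j))) < ?q powr \<gamma>}"
    by (simp add: score_field_reads[OF assms(2,3)] flip: start)
  also have "measure_pmf.prob field \<dots> \<le>
      real (nat \<bar>t\<bar>) * info_variance PX W / (real (nat \<bar>t\<bar>) * MI PX W - \<gamma>)\<^sup>2"
    using aligned_segments_in_window[OF assms(2,3) window] gap assms(1)
    unfolding info_variance_def MI_eq_integral_log_likelihood_ratio[symmetric]
    by (intro prob_Pi_pmf_prod_less_powr_le S finite_set_PYY_pmf likelihood_ratio_pos) auto
  finally show ?thesis .
qed

text \<open>At a misaligned shift the aligned symbols are independent, so the score has mean at most one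
  and Markov's inequality applies.\<close>
lemma prob_false_alarm:
  assumes "t \<in> Tset l" "t \<noteq> 0" "overlap l i1 i2 \<noteq> t" "\<theta> > 0"
  shows "measure_pmf.prob field {Q. \<theta> \<le> field_score t Q} \<le> 1 / \<theta>"
proof -
  have starts: "align_start1 l i1 t \<noteq> align_start2 l i2 t"
    using align_start_eq_iff[OF assms(1,2)] assms(3) by simp
  have finite_field: "finite (set_pmf field)"
    using S finite_set_PYY_pmf by (intro finite_set_Pi_pmf) auto
  have "measure_pmf.prob field {Q. \<theta> \<le> field_score t Q} \<le> (\<integral>Q. field_score t Q \<partial>field) / \<theta>"
    using finite_field assms(4)
    by (intro prob_ge_le_integral_div)
       (auto simp: score_field_reads[OF assms(1,2)] intro!: prod_nonneg likelihood_ratio_nonneg)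
  also have "(\<integral>Q. field_score t Q \<partial>field) \<le> 1"
    using aligned_segments_in_window[OF assms(1,2) window]
    by (simp only: score_field_reads[OF assms(1,2)])
       (intro integral_Pi_pmf_prod_shifted_le_1 S finite_set_PYY_pmf likelihood_ratio_nonneg
         integral_likelihood_ratio_snd_le_1 integral_likelihood_ratio_fst_le_1 starts)
  finally show ?thesis using assms(4) by (simp add: divide_right_mono)
qed

lemma prob_some_false_alarm_le:
  assumes "C \<subseteq> Tset l - {0}" "\<theta> > 0"
  shows "measure_pmf.prob field (\<Union>s\<in>C - {overlap l i1 i2}. {Q. \<theta> \<le> field_score s Q})
    \<le> real (card C) / \<theta>"
proof -
  have finite_C: "finite C" using assms(1) finite_subset[of C "Tset l"] by (auto simp: Tset_def)
  then have "measure_pmf.prob field (\<Union>s\<in>C - {overlap l i1 i2}. {Q. \<theta> \<le> field_score s Q})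
      \<le> (\<Sum>s\<in>C - {overlap l i1 i2}. measure_pmf.prob field {Q. \<theta> \<le> field_score s Q})"
    by (intro measure_pmf.finite_measure_subadditive_finite) auto
  also have "\<dots> \<le> (\<Sum>s\<in>C - {overlap l i1 i2}. 1 / \<theta>)"
    using assms by (intro sum_mono prob_false_alarm) auto
  also have "\<dots> \<le> real (card C) / \<theta>"
    using assms(2) finite_C by (simp add: divide_right_mono card_mono)
  finally show ?thesis .
qed

lemma prob_threshold_detector_error_le:
  assumes "CARD('x) \<ge> 2" "l > 0" "C \<subseteq> Tset l - {0}"
    and gap: "\<forall>t\<in>C. real (nat \<bar>t\<bar>) * MI PX W - \<gamma> > 0"
    and variance: "\<forall>t\<in>C. real (nat \<bar>t\<bar>) * info_variance PX W / (real (nat \<bar>t\<bar>) * MI PX W - \<gamma>)\<^sup>2 \<le> Mb"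
  defines "\<theta> \<equiv> real CARD('x) powr \<gamma>"
  shows "measure_pmf.prob (map_pmf (field_reads l i1 i2) field)
           {(y1, y2). threshold_detector PX W l C \<theta> y1 y2 \<noteq> overlap l i1 i2}
         \<le> (if overlap l i1 i2 \<in> Tset l - {0} - C then 1 else 0)
           + (if overlap l i1 i2 \<in> C then Mb else 0) + real (card C) / \<theta>"
proof -
  let ?t = "overlap l i1 i2"
  have \<theta>_pos: "\<theta> > 0" using assms(1) by (simp add: \<theta>_def)
  have t: "?t \<in> Tset l" using assms(2) by (rule overlap_in_Tset)
  define untested where "untested = {Q :: int \<Rightarrow> 'y \<times> 'y. ?t \<in> Tset l - {0} - C}"
  define missed where "missed = {Q. ?t \<in> C \<and> field_score ?t Q < \<theta>}"
  define alarm where "alarm = (\<Union>s\<in>C - {?t}. {Q. \<theta> \<le> field_score s Q})"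
  have "field_reads l i1 i2 -` {(y1, y2). threshold_detector PX W l C \<theta> y1 y2 \<noteq> ?t}
      \<subseteq> untested \<union> missed \<union> alarm"
    unfolding untested_def missed_def alarm_def
    by (auto elim!: threshold_detector_errorE[OF _ t] simp: case_prod_beta)
  then have "measure_pmf.prob (map_pmf (field_reads l i1 i2) field)
             {(y1, y2). threshold_detector PX W l C \<theta> y1 y2 \<noteq> ?t}
      \<le> measure_pmf.prob field (untested \<union> missed \<union> alarm)"
    by (simp add: measure_pmf.finite_measure_mono)
  also have "\<dots> \<le> measure_pmf.prob field untested + measure_pmf.prob field missed
      + measure_pmf.prob field alarm"
    by (smt (verit) measure_Un_le sets_measure_pmf UNIV_I)
  also have "measure_pmf.prob field untested \<le> (if ?t \<in> Tset l - {0} - C then 1 else 0)"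
    unfolding untested_def by auto
  also have "measure_pmf.prob field missed \<le> (if ?t \<in> C then Mb else 0)"
  proof (cases "?t \<in> C")
    case True
    then have "measure_pmf.prob field missed
        \<le> real (nat \<bar>?t\<bar>) * info_variance PX W / (real (nat \<bar>?t\<bar>) * MI PX W - \<gamma>)\<^sup>2"
      unfolding missed_def \<theta>_def using assms(1,3) gap
      by (intro order.trans[OF _ prob_score_below_true_overlap]) auto
    then show ?thesis using True variance by auto
  qed (simp add: missed_def)
  also have "measure_pmf.prob field alarm \<le> real (card C) / \<theta>"
    unfolding alarm_def using assms(3) \<theta>_pos by (rule prob_some_false_alarm_le)
  finally show ?thesis by simp
qed

end

section \<open>Averaging over the read positions\<close>

abbreviation read_window :: "nat \<Rightarrow> nat \<Rightarrow> int set" where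
  "read_window n l \<equiv> {- int n - 2 * int l .. int n + 2 * int l}"

lemma finite_I2set: "finite (I2set n l i1)"
  unfolding I2set_def by auto

lemma card_I2set: "card (I2set n l i1) = n"
  unfolding I2set_def by auto

lemma reads_in_read_window:
  assumes "i1 \<in> {1..int n}" "i2 \<in> I2set n l i1"
  shows "\<forall>k<l. i1 + int k \<in> read_window n l \<and> i2 + int k \<in> read_window n l"
  using assms unfolding I2set_def by (auto split: if_splits)

text \<open>For fixed \<open>I(1)\<close>, each nonzero overlap value is attained by at most one \<open>I(2)\<close>.\<close>
lemma card_I2set_overlap_in_le:
  assumes "finite B" "0 \<notin> B"
  shows "card {i2 \<in> I2set n l i1. overlap l i1 i2 \<in> B} \<le> card B"
proof (rule card_inj_on_le[where f = "overlap l i1"])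
  have "i2 = i2'" if "overlap l i1 i2 = overlap l i1 i2'" "overlap l i1 i2 \<noteq> 0" for i2 i2'
    using that unfolding overlap_def by (auto split: if_splits)
  then show "inj_on (overlap l i1) {i2 \<in> I2set n l i1. overlap l i1 i2 \<in> B}"
    using assms(2) by (intro inj_onI) force
qed (use assms in auto)

lemma noisy_reads_eq_field_reads:
  assumes "i1 \<in> {1..int n}" "i2 \<in> I2set n l i1"
  shows "do {X \<leftarrow> Pi_pmf (read_window n l) undefined (\<lambda>_. PX);
             y1 \<leftarrow> chan W (read l X i1); y2 \<leftarrow> chan W (read l X i2); return_pmf (y1, y2)}
       = map_pmf (field_reads l i1 i2) (Pi_pmf (read_window n l) undefined (\<lambda>_. PYY_pmf PX W))"
proof -
  have read_eq: "read l X i = map X (map (\<lambda>k. i + int k) [0..<l])" for X i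
    unfolding read_def by simp
  have field_reads_eq: "field_reads l i1 i2 = (\<lambda>Q. (map (\<lambda>p. fst (Q p)) (map (\<lambda>k. i1 + int k) [0..<l]),
      map (\<lambda>p. snd (Q p)) (map (\<lambda>k. i2 + int k) [0..<l])))"
    by (simp add: field_reads_def fun_eq_iff)
  show ?thesis
    unfolding read_eq field_reads_eq
    by (rule noisy_reads_eq_map_Pi_PYY_pmf)
       (use reads_in_read_window[OF assms] in \<open>auto simp: distinct_map inj_on_def\<close>)
qed

lemma Perror_eq_average:
  fixes PX :: "'x::finite pmf" and W :: "'x \<Rightarrow> 'y::finite pmf"
  assumes "n > 0"
  shows "Perror PX W l n g = (\<Sum>i1\<in>{1..int n}. \<Sum>i2\<in>I2set n l i1.
     measure_pmf.prob (map_pmf (field_reads l i1 i2) (Pi_pmf (read_window n l) undefined (\<lambda>_. PYY_pmf PX W)))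
       {(y1, y2). g y1 y2 \<noteq> overlap l i1 i2}) / (real n * real n)"
proof -
  let ?R = "\<lambda>i1 i2. map_pmf (field_reads l i1 i2) (Pi_pmf (read_window n l) undefined (\<lambda>_. PYY_pmf PX W))"
  have I2set_nonempty: "I2set n l i1 \<noteq> {}" for i1
    using assms card_I2set[of n l i1] by auto
  have joint_eq: "joint PX W l n = do {i1 \<leftarrow> pmf_of_set {1 .. int n}; i2 \<leftarrow> pmf_of_set (I2set n l i1);
      map_pmf (\<lambda>(y1, y2). (overlap l i1 i2, y1, y2)) (?R i1 i2)}"
  proof -
    have "joint PX W l n = do {i1 \<leftarrow> pmf_of_set {1 .. int n}; i2 \<leftarrow> pmf_of_set (I2set n l i1);
      map_pmf (\<lambda>(y1, y2). (overlap l i1 i2, y1, y2))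
       (do {X \<leftarrow> Pi_pmf (read_window n l) undefined (\<lambda>_. PX);
            y1 \<leftarrow> chan W (read l X i1); y2 \<leftarrow> chan W (read l X i2); return_pmf (y1, y2)})}"
      unfolding joint_def by (simp add: map_bind_pmf map_return_pmf)
    also have "\<dots> = do {i1 \<leftarrow> pmf_of_set {1 .. int n}; i2 \<leftarrow> pmf_of_set (I2set n l i1);
      map_pmf (\<lambda>(y1, y2). (overlap l i1 i2, y1, y2)) (?R i1 i2)}"
      using assms
      by (intro bind_pmf_cong refl) (auto simp: noisy_reads_eq_field_reads finite_I2set I2set_nonempty)
    finally show ?thesis .
  qed
  have "Perror PX W l n g = (\<integral>i1. (\<integral>i2. measure_pmf.prob (?R i1 i2)
          {(y1, y2). g y1 y2 \<noteq> overlap l i1 i2} \<partial>pmf_of_set (I2set n l i1)) \<partial>pmf_of_set {1..int n})"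
    unfolding Perror_def joint_eq measure_bind_pmf
    by (simp add: vimage_def case_prod_unfold)
  also have "\<dots> = (\<Sum>i1\<in>{1..int n}. \<Sum>i2\<in>I2set n l i1. measure_pmf.prob (?R i1 i2)
          {(y1, y2). g y1 y2 \<noteq> overlap l i1 i2}) / (real n * real n)"
    using assms I2set_nonempty
    by (simp add: integral_pmf_of_set finite_I2set card_I2set sum_divide_distrib)
  finally show ?thesis .
qed

lemma Perror_threshold_detector_le:
  fixes PX :: "'x::finite pmf" and W :: "'x \<Rightarrow> 'y::finite pmf"
  assumes q: "CARD('x) \<ge> 2" and "l > 0" "n > 0" and C: "C \<subseteq> Tset l - {0}"
    and gap: "\<forall>t\<in>C. real (nat \<bar>t\<bar>) * MI PX W - \<gamma> > 0"
    and variance: "\<forall>t\<in>C. real (nat \<bar>t\<bar>) * info_variance PX W / (real (nat \<bar>t\<bar>) * MI PX W - \<gamma>)\<^sup>2 \<le> Mb"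
    and "Mb \<ge> 0"
  defines "\<theta> \<equiv> real CARD('x) powr \<gamma>"
  shows "Perror PX W l n (threshold_detector PX W l C \<theta>) \<le>
     real (card (Tset l - {0} - C)) / real n + Mb * real (card C) / real n + real (card C) / \<theta>"
proof -
  let ?B = "Tset l - {0} - C"
  let ?K = "real (card C) / \<theta>"
  let ?R = "\<lambda>i1 i2. map_pmf (field_reads l i1 i2) (Pi_pmf (read_window n l) undefined (\<lambda>_. PYY_pmf PX W))"
  let ?bound = "\<lambda>i1 i2. (if overlap l i1 i2 \<in> ?B then 1 else 0) + (if overlap l i1 i2 \<in> C then Mb else 0) + ?K"
  have finite_C: "finite C" using C finite_subset[of C "Tset l"] by (auto simp: Tset_def)
  have pair: "measure_pmf.prob (?R i1 i2) {(y1, y2). threshold_detector PX W l C \<theta> y1 y2 \<noteq> overlap l i1 i2}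
      \<le> ?bound i1 i2" if "i1 \<in> {1..int n}" "i2 \<in> I2set n l i1" for i1 i2
    unfolding \<theta>_def
    by (rule prob_threshold_detector_error_le[OF _ reads_in_read_window[OF that] q \<open>l > 0\<close> C gap variance])
       simp
  have row: "(\<Sum>i2\<in>I2set n l i1. ?bound i1 i2) \<le> real (card ?B) + Mb * real (card C) + real n * ?K" for i1
  proof -
    have "(\<Sum>i2\<in>I2set n l i1. ?bound i1 i2) =
        real (card {i2 \<in> I2set n l i1. overlap l i1 i2 \<in> ?B})
        + Mb * real (card {i2 \<in> I2set n l i1. overlap l i1 i2 \<in> C}) + real n * ?K"
      by (simp add: sum.distrib card_I2set finite_I2set sum.If_cases Int_def)
    also have "\<dots> \<le> real (card ?B) + Mb * real (card C) + real n * ?K"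
      using C finite_C \<open>Mb \<ge> 0\<close>
      by (intro add_mono mult_left_mono order_refl of_nat_mono card_I2set_overlap_in_le)
         (auto simp: Tset_def)
    finally show ?thesis .
  qed
  have "Perror PX W l n (threshold_detector PX W l C \<theta>) \<le>
      (\<Sum>i1\<in>{1..int n}. \<Sum>i2\<in>I2set n l i1. ?bound i1 i2) / (real n * real n)"
    unfolding Perror_eq_average[OF \<open>n > 0\<close>] using pair by (intro divide_right_mono sum_mono) auto
  also have "\<dots> \<le> (\<Sum>i1\<in>{1..int n}. real (card ?B) + Mb * real (card C) + real n * ?K) / (real n * real n)"
    using row by (intro divide_right_mono sum_mono) auto
  also have "\<dots> = real (card ?B) / real n + Mb * real (card C) / real n + ?K"
    using \<open>n > 0\<close> by (simp add: add_divide_distrib)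
  finally show ?thesis .
qed

lemma Perror_opt_le_Perror:
  fixes PX :: "'x::finite pmf" and W :: "'x \<Rightarrow> 'y::finite pmf"
  assumes "l = readlen CARD('x) \<beta> n" "\<And>a b. g a b \<in> Tset l"
  shows "Perror_opt PX W \<beta> n \<le> Perror PX W l n g"
proof -
  have "(INF g\<in>{g. \<forall>a b. g a b \<in> Tset l}. Perror PX W l n g) \<le> Perror PX W l n g"
    using assms(2) by (intro cINF_lower) (auto intro!: bdd_belowI[of _ 0] simp: Perror_def)
  then show ?thesis using assms(1) by (simp add: Perror_opt_def Let_def)
qed

section \<open>Read length and overlap counting\<close>

lemma real_nat_round_le:
  fixes x :: real
  assumes "x \<ge> 0"
  shows "real (nat (round x)) \<le> x + 1/2"
  using of_int_round_le[of x] assms by linarith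

lemma nat_round_pos:
  fixes x :: real
  assumes "x \<ge> 1"
  shows "nat (round x) > 0"
  using of_int_round_gt[of x] assms by linarith

lemma readlen_bounds:
  assumes "\<beta> * log (real q) (real n) \<ge> 1"
  shows "readlen q \<beta> n > 0" "real (readlen q \<beta> n) \<le> \<beta> * log (real q) (real n) + 1/2"
  using assms nat_round_pos real_nat_round_le unfolding readlen_def by auto

lemma card_Tset_minus_0: "l > 0 \<Longrightarrow> card (Tset l - {0}) = 2 * l - 1"
  unfolding Tset_def by (subst card_Diff_singleton) auto

lemma card_Tset: "card (Tset l) = 2 * l"
  unfolding Tset_def by auto

lemma card_nonzero_abs_less_le:
  fixes m :: real
  assumes "m > 0" "B \<subseteq> {t :: int. t \<noteq> 0 \<and> real_of_int \<bar>t\<bar> < m}"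
  shows "real (card B) \<le> 2 * m"
proof -
  define K where "K = \<lceil>m\<rceil> - 1"
  have "K \<ge> 0" using assms by (simp add: K_def)
  have "B \<subseteq> {-K..K} - {0}"
  proof
    fix t assume "t \<in> B"
    then have "t \<noteq> 0" "real_of_int \<bar>t\<bar> < m" using assms(2) by auto
    then have "\<bar>t\<bar> < \<lceil>m\<rceil>" by linarith
    then show "t \<in> {-K..K} - {0}" using \<open>t \<noteq> 0\<close> unfolding K_def by auto
  qed
  then have "card B \<le> card ({-K..K} - {0})"
    by (intro card_mono) auto
  also have "card ({-K..K} - {0}) = nat (2 * K)"
    using \<open>K \<ge> 0\<close> by simp
  finally have "real (card B) \<le> real (nat (2 * K))"
    by (simp only: of_nat_le_iff)
  moreover have "real (nat (2 * K)) = 2 * real_of_int K" using \<open>K \<ge> 0\<close> by simp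
  moreover have "real_of_int K < m" unfolding K_def by linarith
  ultimately show ?thesis by linarith
qed

lemma eventually_Perror_opt_le_beta:
  fixes PX :: "'x::finite pmf" and W :: "'x \<Rightarrow> 'y::finite pmf"
  assumes q: "CARD('x) \<ge> 2" and "\<beta> > 0"
  shows "\<forall>\<^sub>F n in sequentially. Perror_opt PX W \<beta> n \<le> 2 * \<beta> * log (real CARD('x)) (real n) / real n"
proof -
  let ?q = "real CARD('x)"
  have "\<forall>\<^sub>F n in sequentially. 1 / \<beta> \<le> log ?q (real n)"
    using q by real_asymp
  then show ?thesis
  proof eventually_elim
    case (elim n)
    define l where "l = readlen CARD('x) \<beta> n"
    have "\<beta> * log ?q (real n) \<ge> 1" using elim \<open>\<beta> > 0\<close> by (simp add: field_simps)
    then have "l > 0" "real l \<le> \<beta> * log ?q (real n) + 1/2" and "n > 0"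
      using readlen_bounds[of \<beta> "CARD('x)" n] by (auto simp: l_def log_def intro!: Nat.gr0I)
    have "Perror_opt PX W \<beta> n \<le> Perror PX W l n (threshold_detector PX W l {} 1)"
      using \<open>l > 0\<close> by (intro Perror_opt_le_Perror threshold_detector_in_Tset) (auto simp: l_def)
    also have "\<dots> \<le> real (card (Tset l - {0})) / real n"
      using Perror_threshold_detector_le[OF q \<open>l > 0\<close> \<open>n > 0\<close>, where C = "{}" and \<gamma> = 0 and Mb = 0]
      by simp
    also have "\<dots> \<le> 2 * \<beta> * log ?q (real n) / real n"
      using \<open>l > 0\<close> \<open>real l \<le> _\<close> \<open>n > 0\<close> by (intro divide_right_mono) (auto simp: card_Tset_minus_0)
    finally show ?case .
  qed
qed

section \<open>Achievability\<close>

lemma chebyshev_ratio_le_of_long_overlap: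
  fixes k l \<mu> V L \<delta> :: real
  assumes "(1 + \<delta>) * L \<le> k * \<mu>" "k \<le> l" "0 \<le> k" "\<delta> > 0" "L > 0" "V \<ge> 0"
  shows "k * \<mu> - (1 + \<delta>/2) * L > 0" "k * V / (k * \<mu> - (1 + \<delta>/2) * L)\<^sup>2 \<le> 4 * l * V / (\<delta> * L)\<^sup>2"
proof -
  have gap: "k * \<mu> - (1 + \<delta>/2) * L \<ge> \<delta> * L / 2" using assms(1) by (simp add: algebra_simps)
  moreover have "\<delta> * L / 2 > 0" using assms(4,5) by simp
  ultimately show "k * \<mu> - (1 + \<delta>/2) * L > 0" by linarith
  have "k * V / (k * \<mu> - (1 + \<delta>/2) * L)\<^sup>2 \<le> l * V / (\<delta> * L / 2)\<^sup>2"
    using gap assms by (intro frac_le mult_right_mono power_mono) auto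
  then show "k * V / (k * \<mu> - (1 + \<delta>/2) * L)\<^sup>2 \<le> 4 * l * V / (\<delta> * L)\<^sup>2"
    by (simp add: power_divide mult_ac)
qed

text \<open>Test the overlaps \<open>t\<close> with \<open>|t| \<mu> \<ge> (1 + \<delta>) L\<close> at threshold \<open>n powr (1 + \<delta>/2)\<close>: the
  untested overlaps cost \<open>2 (1 + \<delta>) L / (\<mu> n)\<close>, missing a tested one costs its Chebyshev bound,
  and the false alarms cost \<open>2 l\<close> divided by the threshold.\<close>
lemma Perror_opt_le_threshold_bound:
  fixes PX :: "'x::finite pmf" and W :: "'x \<Rightarrow> 'y::finite pmf"
  assumes q: "CARD('x) \<ge> 2" and \<mu>: "MI PX W > 0" and \<delta>: "\<delta> > 0" and "n > 0"
    and l: "l = readlen CARD('x) \<beta> n" "l > 0"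
  defines "L \<equiv> log (real CARD('x)) (real n)"
  assumes "L > 0"
  shows "Perror_opt PX W \<beta> n \<le> 2 * (1 + \<delta>) * L / (MI PX W * real n)
      + 8 * (real l)\<^sup>2 * info_variance PX W / ((\<delta> * L)\<^sup>2 * real n) + 2 * real l / real n powr (1 + \<delta>/2)"
proof -
  let ?q = "real CARD('x)" and ?\<mu> = "MI PX W" and ?V = "info_variance PX W"
  define \<gamma> where "\<gamma> = (1 + \<delta>/2) * L"
  define m where "m = (1 + \<delta>) * L / ?\<mu>"
  define C where "C = {t \<in> Tset l. t \<noteq> 0 \<and> m \<le> real_of_int \<bar>t\<bar>}"
  define Mb where "Mb = 4 * real l * ?V / (\<delta> * L)\<^sup>2"
  have C: "C \<subseteq> Tset l - {0}" unfolding C_def by auto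
  have "?q powr \<gamma> = (?q powr L) powr (1 + \<delta>/2)" by (simp add: \<gamma>_def powr_powr mult.commute)
  also have "?q powr L = real n" using q \<open>n > 0\<close> by (simp add: L_def)
  finally have \<theta>: "?q powr \<gamma> = real n powr (1 + \<delta>/2)" .
  have long: "(1 + \<delta>) * L \<le> real (nat \<bar>t\<bar>) * ?\<mu>" "real (nat \<bar>t\<bar>) \<le> real l" if "t \<in> C" for t
    using that \<mu> by (auto simp: C_def Tset_def m_def pos_divide_le_eq)
  have gap_pos: "real (nat \<bar>t\<bar>) * ?\<mu> - \<gamma> > 0"
    and variance: "real (nat \<bar>t\<bar>) * ?V / (real (nat \<bar>t\<bar>) * ?\<mu> - \<gamma>)\<^sup>2 \<le> Mb" if "t \<in> C" for t
    using chebyshev_ratio_le_of_long_overlap[OF long[OF that] _ \<delta> \<open>L > 0\<close> info_variance_nonneg]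
    by (simp_all add: \<gamma>_def Mb_def)
  have "Perror_opt PX W \<beta> n \<le> Perror PX W l n (threshold_detector PX W l C (?q powr \<gamma>))"
    using C l by (intro Perror_opt_le_Perror threshold_detector_in_Tset) auto
  also have "\<dots> \<le> real (card (Tset l - {0} - C)) / real n + Mb * real (card C) / real n
      + real (card C) / ?q powr \<gamma>"
    using gap_pos variance info_variance_nonneg[of PX W]
    by (intro Perror_threshold_detector_le q l(2) \<open>n > 0\<close> C) (auto simp: Mb_def)
  also have "\<dots> \<le> 2 * m / real n + Mb * (2 * real l) / real n + 2 * real l / real n powr (1 + \<delta>/2)"
  proof -
    have "Tset l - {0} - C \<subseteq> {t. t \<noteq> 0 \<and> real_of_int \<bar>t\<bar> < m}" by (auto simp: C_def)
    moreover have "m > 0" using \<mu> \<delta> \<open>L > 0\<close> by (simp add: m_def)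
    ultimately have "real (card (Tset l - {0} - C)) \<le> 2 * m"
      by (intro card_nonzero_abs_less_le)
    moreover have "real (card C) \<le> 2 * real l"
      using card_mono[of "Tset l" C] C card_Tset[of l] by (force simp: Tset_def)
    moreover from this have "real (card C) / ?q powr \<gamma> \<le> 2 * real l / real n powr (1 + \<delta>/2)"
      unfolding \<theta> by (simp add: divide_right_mono)
    ultimately show ?thesis
      using info_variance_nonneg[of PX W]
      by (intro add_mono divide_right_mono mult_left_mono) (auto simp: Mb_def)
  qed
  also have "\<dots> = 2 * (1 + \<delta>) * L / (?\<mu> * real n)
      + 8 * (real l)\<^sup>2 * ?V / ((\<delta> * L)\<^sup>2 * real n) + 2 * real l / real n powr (1 + \<delta>/2)"
    by (simp add: m_def Mb_def power2_eq_square algebra_simps)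
  finally show ?thesis .
qed

lemma divide_powr_one_plus_le:
  fixes x a s :: real
  assumes "x > 0" "a \<le> x powr s"
  shows "a / x powr (1 + s) \<le> 1 / x"
proof -
  have "a / x powr s / x \<le> 1 / x"
    using assms by (intro divide_right_mono) auto
  moreover have "x powr (1 + s) = x powr s * x" using assms(1) by (simp add: powr_add)
  ultimately show ?thesis by (simp only: divide_divide_eq_left)
qed

lemma eventually_Perror_opt_le_inverse_MI:
  fixes PX :: "'x::finite pmf" and W :: "'x \<Rightarrow> 'y::finite pmf"
  assumes q: "CARD('x) \<ge> 2" and "\<beta> > 0" and \<mu>: "MI PX W > 0" and "\<delta> > 0"
  shows "\<forall>\<^sub>F n in sequentially.
    Perror_opt PX W \<beta> n \<le> 2 * (1 + \<delta>) * log (real CARD('x)) (real n) / (MI PX W * real n)"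
proof -
  let ?q = "real CARD('x)" and ?\<mu> = "MI PX W" and ?V = "info_variance PX W"
  define K where "K = 32 * (\<beta> + 1)\<^sup>2 * ?V / \<delta>\<^sup>2"
  define c where "c = max 1 (max (1 / \<beta>) ((K + 1) * ?\<mu> / \<delta>))"
  have "\<forall>\<^sub>F n in sequentially. c \<le> log ?q (real n)"
    using q by real_asymp
  moreover have "\<forall>\<^sub>F n in sequentially. 2 * (\<beta> + 1) * log ?q (real n) \<le> real n powr (\<delta>/4)"
    using q \<open>\<delta> > 0\<close> by real_asymp
  ultimately show ?thesis
  proof eventually_elim
    case (elim n)
    define L where "L = log ?q (real n)"
    define l where "l = readlen CARD('x) \<beta> n"
    have "L \<ge> 1" "\<beta> * L \<ge> 1" and K: "K + 1 \<le> \<delta> * L / ?\<mu>"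
      using elim(1) \<open>\<beta> > 0\<close> \<open>\<delta> > 0\<close> \<mu> by (auto simp: c_def L_def field_simps)
    have "n > 0" using \<open>L \<ge> 1\<close> by (auto simp: L_def log_def intro!: Nat.gr0I)
    have "l > 0" "real l \<le> \<beta> * L + 1/2"
      using readlen_bounds[of \<beta> "CARD('x)" n] \<open>\<beta> * L \<ge> 1\<close> by (auto simp: L_def l_def)
    then have l_le: "real l \<le> (\<beta> + 1) * L" using \<open>L \<ge> 1\<close> by (simp add: algebra_simps)
    have "Perror_opt PX W \<beta> n \<le> 2 * (1 + \<delta>/2) * L / (?\<mu> * real n)
      + 8 * (real l)\<^sup>2 * ?V / ((\<delta>/2 * L)\<^sup>2 * real n) + 2 * real l / real n powr (1 + \<delta>/4)"
      using Perror_opt_le_threshold_bound[OF q \<mu> _ \<open>n > 0\<close> l_def \<open>l > 0\<close>, of "\<delta>/2"] \<open>\<delta> > 0\<close> \<open>L \<ge> 1\<close>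
      by (simp add: L_def)
    also have "8 * (real l)\<^sup>2 * ?V / ((\<delta>/2 * L)\<^sup>2 * real n) \<le> K / real n"
    proof -
      have "8 * (real l)\<^sup>2 * ?V / (\<delta>/2 * L)\<^sup>2 \<le> 8 * ((\<beta> + 1) * L)\<^sup>2 * ?V / (\<delta>/2 * L)\<^sup>2"
        using l_le info_variance_nonneg[of PX W]
        by (intro divide_right_mono mult_right_mono mult_left_mono power_mono) auto
      also have "\<dots> = K"
        unfolding K_def power_mult_distrib using \<open>L \<ge> 1\<close> \<open>\<delta> > 0\<close> by (simp add: field_simps)
      finally show ?thesis by (simp add: divide_right_mono flip: divide_divide_eq_left)
    qed
    also have "2 * real l / real n powr (1 + \<delta>/4) \<le> 1 / real n"
    proof (rule divide_powr_one_plus_le)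
      have "2 * real l \<le> 2 * ((\<beta> + 1) * L)" using l_le by linarith
      then show "2 * real l \<le> real n powr (\<delta>/4)" using elim(2) unfolding L_def mult.assoc by linarith
    qed (use \<open>n > 0\<close> in simp)
    also have "2 * (1 + \<delta>/2) * L / (?\<mu> * real n) + K / real n + 1 / real n
        \<le> 2 * (1 + \<delta>/2) * L / (?\<mu> * real n) + \<delta> * L / ?\<mu> / real n"
    proof -
      have "K / real n + 1 / real n = (K + 1) / real n" by (simp add: add_divide_distrib)
      moreover have "(K + 1) / real n \<le> \<delta> * L / ?\<mu> / real n" by (intro divide_right_mono K) simp
      ultimately show ?thesis by linarith
    qed
    also have "\<dots> = 2 * (1 + \<delta>) * L / (?\<mu> * real n)"
      using \<mu> \<open>n > 0\<close> by (simp add: field_simps)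
    finally show ?case by (simp add: L_def)
  qed
qed

lemma coef_pos: "\<beta> > 0 \<Longrightarrow> I \<ge> 0 \<Longrightarrow> coef \<beta> I > 0"
  unfolding coef_def by auto

lemma eventually_Perror_opt_le_coef:
  fixes PX :: "'x::finite pmf" and W :: "'x \<Rightarrow> 'y::finite pmf"
  assumes q: "CARD('x) \<ge> 2" and "\<beta> > 0" "\<delta> > 0"
  shows "\<forall>\<^sub>F n in sequentially. Perror_opt PX W \<beta> n
     \<le> (1 + \<delta>) * (2 * coef \<beta> (MI PX W) * log (real CARD('x)) (real n) / real n)"
proof -
  let ?q = "real CARD('x)" and ?\<mu> = "MI PX W"
  have nonneg: "\<forall>\<^sub>F n in sequentially. 0 \<le> log ?q (real n)"
    using q by real_asymp
  have beta_bound: "\<forall>\<^sub>F n in sequentially.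
      Perror_opt PX W \<beta> n \<le> (1 + \<delta>) * (2 * \<beta> * log ?q (real n) / real n)"
    using eventually_Perror_opt_le_beta[OF q \<open>\<beta> > 0\<close>, of PX W] nonneg
  proof eventually_elim
    case (elim n)
    let ?x = "2 * \<beta> * log ?q (real n) / real n"
    have "0 \<le> \<delta> * ?x"
      using elim(2) \<open>\<beta> > 0\<close> \<open>\<delta> > 0\<close> by (intro mult_nonneg_nonneg divide_nonneg_nonneg) auto
    moreover have "(1 + \<delta>) * ?x = ?x + \<delta> * ?x" by (simp only: distrib_right mult_1)
    ultimately show ?case using elim(1) by linarith
  qed
  show ?thesis
  proof (cases "?\<mu> = 0")
    case True
    then show ?thesis using beta_bound by (simp add: coef_def)
  next
    case False
    then have "?\<mu> > 0" using MI_nonneg[OF q] by (simp add: less_le)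
    show ?thesis
      using eventually_Perror_opt_le_inverse_MI[OF q \<open>\<beta> > 0\<close> \<open>?\<mu> > 0\<close> \<open>\<delta> > 0\<close>] beta_bound
    proof eventually_elim
      case (elim n)
      show ?case
      proof (cases "\<beta> \<le> 1 / ?\<mu>")
        case True
        then show ?thesis using elim(2) \<open>?\<mu> > 0\<close> by (simp add: coef_def)
      next
        case False
        then have "coef \<beta> ?\<mu> = 1 / ?\<mu>" using \<open>?\<mu> > 0\<close> by (simp add: coef_def)
        moreover have "2 * (1 + \<delta>) * log ?q (real n) / (?\<mu> * real n)
            = (1 + \<delta>) * (2 * (1 / ?\<mu>) * log ?q (real n) / real n)"
          by simp
        ultimately show ?thesis using elim(1) by (simp only:)
      qed
    qed
  qed
qed

lemma vanishing_slack:
  fixes f g :: "nat \<Rightarrow> real"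
  assumes "\<And>\<delta>. \<delta> > 0 \<Longrightarrow> \<forall>\<^sub>F n in sequentially. f n \<le> (1 + \<delta>) * g n"
    and "\<forall>\<^sub>F n in sequentially. g n > 0"
  shows "\<exists>\<epsilon>. \<epsilon> \<longlonglongrightarrow> 0 \<and> (\<forall>\<^sub>F n in sequentially. f n \<le> (1 + \<epsilon> n) * g n)"
proof (intro exI conjI)
  define \<epsilon> where "\<epsilon> n = max 0 (f n / g n - 1)" for n
  show "\<epsilon> \<longlonglongrightarrow> 0"
  proof (rule tendstoI)
    fix e :: real assume "e > 0"
    then have "\<forall>\<^sub>F n in sequentially. f n \<le> (1 + e/2) * g n" by (intro assms(1)) simp
    with assms(2) show "\<forall>\<^sub>F n in sequentially. dist (\<epsilon> n) 0 < e"
    proof eventually_elim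
      case (elim n)
      then have "f n / g n \<le> 1 + e/2" by (simp add: divide_le_eq)
      then show ?case using \<open>e > 0\<close> by (simp add: \<epsilon>_def)
    qed
  qed
  show "\<forall>\<^sub>F n in sequentially. f n \<le> (1 + \<epsilon> n) * g n"
    using assms(2)
  proof eventually_elim
    case (elim n)
    have "f n / g n \<le> 1 + \<epsilon> n" by (simp add: \<epsilon>_def)
    then show ?case using elim by (simp add: divide_le_eq)
  qed
qed

theorem mainTheorem3:
  fixes PX :: "'x::finite pmf" and W :: "'x \<Rightarrow> 'y::finite pmf" and \<beta> :: real
  assumes "CARD('x) \<ge> 2" and "\<beta> > 0"
  shows "\<exists>\<epsilon> :: nat \<Rightarrow> real. \<epsilon> \<longlonglongrightarrow> 0 \<and>
           (\<forall>\<^sub>F n in sequentially.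
              Perror_opt PX W \<beta> n
                \<le> 2 * (1 + \<epsilon> n) * coef \<beta> (MI PX W) * log (real CARD('x)) (real n) / real n)"
proof -
  let ?g = "\<lambda>n. 2 * coef \<beta> (MI PX W) * log (real CARD('x)) (real n) / real n"
  have "coef \<beta> (MI PX W) > 0" using coef_pos MI_nonneg assms by blast
  moreover have "\<forall>\<^sub>F n in sequentially. log (real CARD('x)) (real n) / real n > 0"
    using assms(1) by real_asymp
  ultimately have "\<forall>\<^sub>F n in sequentially. ?g n > 0"
    by (auto elim!: eventually_mono simp flip: times_divide_eq_right)
  then obtain \<epsilon> :: "nat \<Rightarrow> real" where "\<epsilon> \<longlonglongrightarrow> 0"
      and "\<forall>\<^sub>F n in sequentially. Perror_opt PX W \<beta> n \<le> (1 + \<epsilon> n) * ?g n"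
    using vanishing_slack[of "Perror_opt PX W \<beta>" ?g] eventually_Perror_opt_le_coef[OF assms] by blast
  then show ?thesis by (auto elim!: eventually_mono simp: algebra_simps)
qed

end
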